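(* Let $\mathfrak S=(\mathcal S,\mathcal U,T_{\mathfrak s})$ be a controlled Markov process, let $\mathcal P=\langle B_1,\dots,B_\ell\rangle$ be a partition of $\mathcal S$ into measurable sets, and let $\rho$ be any stationary control policy. Let $W:=\mathsf{WinDom}(\mathfrak S,\rho)=\{s\in\mathcal S\mid P_s^{\rho}(\mathfrak S\models \mathit{Parity}(\mathcal P))=1\}$. Then for every $s\in\mathcal S$: $P_s^{\rho}(\mathfrak S\models \mathit{Parity}(\mathcal P))=1$ if $s\in W$, and $P_s^{\rho}(\mathfrak S\models \mathit{Parity}(\mathcal P))\ge P_s^{\rho}(\mathfrak S\models \lozenge W)$ if $s\notin W$.
   Context: A controlled Markov process (CMP) is a tuple $\mathfrak S=(\mathcal S,\mathcal U,T_{\mathfrak s})$ where $\mathcal S$ is a Borel space (with its Borel $\sigma$-algebra $\mathcal B(\mathcal S)$), $\mathcal U$ is a finite set of inputs, and $T_{\mathfrak s}$ is a stochastic kernel assigning to each $s\in\mathcal S$, $u\in\mathcal U$ a probability measure $T_{\mathfrak s}(\cdot\mid s,u)$ on $(\mathcal S,\mathcal B(\mathcal S))$. A stationary control policy is a universally measurable map $\rho:\mathcal S\to\mathcal U$. For $s\in\mathcal S$, $P_s^\rho$ denotes the unique probability measure on infinite paths $(s^0,s^1,\dots)\in\mathcal S^\omega$ with $s^0=s$ and $s^{k+1}$ distributed according to $T_{\mathfrak s}(\cdot\mid s^k,\rho(s^k))$. Given the partition $\mathcal P=\langle B_1,\dots,B_\ell\rangle$ of $\mathcal S$ (some $B_i$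 may be empty; $i$ is the priority of $B_i$), an infinite path satisfies $\mathit{Parity}(\mathcal P)$ iff for every odd $i\in\{1,\dots,\ell\}$, if the path visits $B_i$ infinitely often then it visits $B_j$ infinitely often for some even $j\in\{i+1,\dots,\ell\}$; $(\mathfrak S\models\mathit{Parity}(\mathcal P))$ denotes the set of such paths. For $W\subseteq\mathcal S$, $(\mathfrak S\models\lozenge W)$ is the set of paths $(s^0,s^1,\dots)$ with $s^n\in W$ for some $n\in\mathbb N$. *)

theory Defs
  imports "HOL-Probability.Probability"
begin

definition cmp :: "('s::polish_space \<Rightarrow> 'u::finite \<Rightarrow> 's measure) \<Rightarrow> bool" where
  "cmp T \<longleftrightarrow>
     (\<forall>s u. prob_space (T s u) \<and> sets (T s u) = sets (borel :: 's measure)) \<and>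
     (\<forall>u A. A \<in> sets (borel :: 's measure) \<longrightarrow> (\<lambda>s. emeasure (T s u) A) \<in> borel_measurable borel)"

definition univ_measurable :: "('s::topological_space \<Rightarrow> 'u) \<Rightarrow> bool" where
  "univ_measurable f \<longleftrightarrow>
     (\<forall>\<mu>::'s measure. prob_space \<mu> \<and> sets \<mu> = sets borel \<longrightarrow>
        f \<in> measurable (completion \<mu>) (count_space UNIV))"

text \<open>P s is the path measure P_s^rho: a probability measure on infinite paths
(streams, Borel product sigma-algebra), starting in s, with successor states
distributed according to T(.|s, rho s) (Markov property).  This fixpoint
equation determines the family uniquely (it fixes all cylinder probabilities).\<close>
definition path_measure ::
  "('s::polish_space \<Rightarrow> 'u \<Rightarrow> 's measure) \<Rightarrow> ('s \<Rightarrow> 'u) \<Rightarrow> ('s \<Rightarrow> 's stream measure) \<Rightarrow> bool" where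
  "path_measure T \<rho> P \<longleftrightarrow>
     (\<forall>s. prob_space (P s) \<and> sets (P s) = sets (stream_space (borel :: 's measure)) \<and>
        (\<forall>X \<in> sets (stream_space (borel :: 's measure)).
           emeasure (P s) X =
             (\<integral>\<^sup>+ s'. emeasure (P s') {\<omega>. s ## \<omega> \<in> X} \<partial>completion (T s (\<rho> s)))))"

text \<open>B 1, ..., B l is a partition of the state space into measurable sets
(empty blocks allowed).\<close>
definition measurable_partition :: "(nat \<Rightarrow> 's::topological_space set) \<Rightarrow> nat \<Rightarrow> bool" where
  "measurable_partition B l \<longleftrightarrow>
     (\<forall>i\<in>{1..l}. B i \<in> sets borel) \<and>
     (\<forall>i\<in>{1..l}. \<forall>j\<in>{1..l}. i \<noteq> j \<longrightarrow> B i \<inter> B j = {}) \<and>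
     (\<Union>i\<in>{1..l}. B i) = UNIV"

definition Parity :: "(nat \<Rightarrow> 's set) \<Rightarrow> nat \<Rightarrow> 's stream set" where
  "Parity B l = {\<omega>. \<forall>i\<in>{1..l}. odd i \<and> (\<exists>\<^sub>\<infinity>n. \<omega> !! n \<in> B i) \<longrightarrow>
                    (\<exists>j\<in>{i+1..l}. even j \<and> (\<exists>\<^sub>\<infinity>n. \<omega> !! n \<in> B j))}"

definition Eventually_in :: "'s set \<Rightarrow> 's stream set" where
  "Eventually_in W = {\<omega>. \<exists>n. \<omega> !! n \<in> W}"

text \<open>Probabilities of path events are taken in the completion of P_s
(universally measurable path events).\<close>
definition WinDom :: "('s \<Rightarrow> 's stream measure) \<Rightarrow> (nat \<Rightarrow> 's set) \<Rightarrow> nat \<Rightarrow> 's set" where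
  "WinDom P B l = {s. measure (completion (P s)) (Parity B l) = 1}"

end

theory Submission
  imports Defs
begin

(*
  Let W be the set of states from which the parity objective holds almost surely.  The key claim
  is that, for every n and every initial state, almost every path that is in W at time n satisfies
  the objective.  For n = 0 this holds because paths start in their initial state; the step from
  n to n + 1 is the Markov property, using that the parity objective does not depend on the first
  state of a path.  A countable union over n then shows that almost every path that eventually
  visits W satisfies the objective, so P_s(Parity) >= P_s(eventually W).

  The delicate point is measurability.  The policy is only universally measurable, hence so is
  s |-> P_s(X) for each measurable path event X (on cylinders by induction, in general by
  Dynkin's pi-lambda theorem); consequently W, and the events "in W at time n", are measurable
  only in the completions of the measures involved.
*)

lemma sets_stream_space_eq_sigma_scylinder:
  "sets (stream_space M) = sigma_sets (streams (space M)) (scylinder (space M) ` lists (sets M))"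
proof -
  let ?G = "scylinder (space M) ` lists (sets M)"
  have G: "?G \<subseteq> Pow (streams (space M))"
    using scylinder_streams by blast
  have "sets (stream_space M) \<subseteq> sigma_sets (streams (space M)) ?G"
  proof (rule sets_stream_space_in_sets[where N = "sigma (streams (space M)) ?G", simplified G sets_measure_of])
    show "space (sigma (streams (space M)) ?G) = streams (space M)"
      using G by simp
    fix i
    show "(\<lambda>\<omega>. \<omega> !! i) \<in> sigma (streams (space M)) ?G \<rightarrow>\<^sub>M M"
    proof (rule measurableI)
      show "\<omega> !! i \<in> space M" if "\<omega> \<in> space (sigma (streams (space M)) ?G)" for \<omega>
        using that G by (simp add: streams_iff_snth)
    next
      fix A assume A: "A \<in> sets M"
      have "(\<lambda>\<omega>. \<omega> !! i) -` A \<inter> streams (space M) = scylinder (space M) (replicate i (space M) @ [A])"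
        by (induction i) (auto simp add: streams_shd streams_stl cong: conj_cong)
      also have "\<dots> \<in> sigma_sets (streams (space M)) ?G"
        using A by (intro sigma_sets.Basic imageI) auto
      finally show "(\<lambda>\<omega>. \<omega> !! i) -` A \<inter> space (sigma (streams (space M)) ?G)
          \<in> sets (sigma (streams (space M)) ?G)"
        using G by simp
    qed
  qed
  moreover have "sigma_sets (streams (space M)) ?G \<subseteq> sets (stream_space M)"
    by (rule sets.sigma_sets_subset') (auto simp: space_stream_space intro!: sets_scylinder)
  ultimately show ?thesis
    by blast
qed

lemma Int_stable_scylinder: "Int_stable (scylinder (space M) ` lists (sets M))"
proof (rule Int_stableI_image)
  fix xs ys assume "xs \<in> lists (sets M)" "ys \<in> lists (sets M)"
  then show "\<exists>zs\<in>lists (sets M). scylinder (space M) xs \<inter> scylinder (space M) ys = scylinder (space M) zs"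
  proof (induction xs arbitrary: ys)
    case Nil
    then show ?case
      using scylinder_streams[of "space M" ys] by (intro bexI[of _ ys]) auto
  next
    case (Cons x xs)
    note x_xs = this
    show ?case
    proof (cases ys)
      case Nil
      then show ?thesis
        using x_xs scylinder_streams[of "space M" "x # xs"] by (auto intro!: bexI[of _ "x # xs"])
    next
      case ys: (Cons y ys')
      with x_xs obtain zs where zs: "zs \<in> lists (sets M)"
        and eq: "scylinder (space M) xs \<inter> scylinder (space M) ys' = scylinder (space M) zs"
        by (metis listsE)
      show ?thesis
      proof
        show "(x \<inter> y) # zs \<in> lists (sets M)"
          using x_xs ys zs by auto
        show "scylinder (space M) (x # xs) \<inter> scylinder (space M) ys = scylinder (space M) ((x \<inter> y) # zs)"
          by (auto simp: ys eq[symmetric])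
      qed
    qed
  qed
qed

lemma INFM_stl_snth_iff: "(\<exists>\<^sub>\<infinity>n. stl \<omega> !! n \<in> C) \<longleftrightarrow> (\<exists>\<^sub>\<infinity>n. \<omega> !! n \<in> C)"
  unfolding cofinite_eq_sequentially frequently_def
  by (subst eventually_sequentially_Suc[symmetric]) simp

lemma stl_in_Parity_iff: "stl \<omega> \<in> Parity B l \<longleftrightarrow> \<omega> \<in> Parity B l"
  unfolding Parity_def by (simp add: INFM_stl_snth_iff)

lemma Parity_in_sets:
  assumes "measurable_partition B l"
  shows "Parity B l \<in> sets (stream_space borel)"
proof -
  define B' where "B' i = (if i \<in> {1..l} then B i else {})" for i
  have [measurable]: "B' i \<in> sets borel" for i
    using assms unfolding B'_def measurable_partition_def by auto
  have "Parity B l = Parity B' l"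
    unfolding Parity_def B'_def by (auto intro!: Collect_cong ball_cong)
  also have "\<dots> = {\<omega>\<in>space (stream_space borel). \<forall>i\<in>{1..l}. odd i \<and> (\<forall>m. \<exists>n>m. \<omega> !! n \<in> B' i) \<longrightarrow>
                    (\<exists>j\<in>{i+1..l}. even j \<and> (\<forall>m. \<exists>n>m. \<omega> !! n \<in> B' j))}"
    unfolding Parity_def INFM_nat by (simp add: space_stream_space)
  also have "\<dots> \<in> sets (stream_space borel)"
    by measurable
  finally show ?thesis .
qed

definition univ_borel_measurable :: "('a::topological_space \<Rightarrow> 'b::topological_space) \<Rightarrow> bool" where
  "univ_borel_measurable f \<longleftrightarrow>
     (\<forall>\<mu>::'a measure. prob_space \<mu> \<and> sets \<mu> = sets borel \<longrightarrow> f \<in> borel_measurable (completion \<mu>))"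

lemma univ_borel_measurableD:
  "univ_borel_measurable f \<Longrightarrow> prob_space \<mu> \<Longrightarrow> sets \<mu> = sets borel \<Longrightarrow> f \<in> borel_measurable (completion \<mu>)"
  unfolding univ_borel_measurable_def by blast

lemma borel_measurable_completion_AE_eq:
  assumes H: "H \<in> borel_measurable M" and ae: "AE x in M. h x = H x"
  shows "h \<in> borel_measurable (completion M)"
proof (rule measurableI)
  fix Y :: "'b set" assume Y: "Y \<in> sets borel"
  have "AE x in completion M. x \<in> H -` Y \<inter> space M \<longleftrightarrow> x \<in> h -` Y \<inter> space (completion M)"
    using AE_completion[OF ae] by (auto elim!: eventually_mono)
  moreover have "H -` Y \<inter> space M \<in> sets (completion M)"
    using measurable_sets[OF H Y] by simp
  ultimately show "h -` Y \<inter> space (completion M) \<in> sets (completion M)"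
    by (rule completion.in_sets_AE) auto
qed simp

lemma univ_borel_measurable_nn_integral_completion:
  fixes K :: "'a::topological_space \<Rightarrow> 'b::topological_space measure"
  assumes K: "K \<in> borel \<rightarrow>\<^sub>M prob_algebra borel" and g: "univ_borel_measurable g"
  shows "univ_borel_measurable (\<lambda>s. \<integral>\<^sup>+x. g x \<partial>completion (K s))"
  unfolding univ_borel_measurable_def
proof (intro allI impI, elim conjE)
  fix L :: "'a measure" assume L: "prob_space L" "sets L = sets borel"
  \<comment> \<open>g agrees with a Borel function g' off a set N that is null for the mixture L \<bind> K,
    hence null for K s for L-almost every s.\<close>
  have KL: "K \<in> L \<rightarrow>\<^sub>M prob_algebra borel"
    using K measurable_cong_sets[OF L(2) refl] by blast
  then have KL': "K \<in> L \<rightarrow>\<^sub>M subprob_algebra borel"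
    by (rule measurable_prob_algebraD)
  have "L \<in> space (prob_algebra L)"
    by (simp add: space_prob_algebra L)
  then have \<nu>: "prob_space (L \<bind> K)" "sets (L \<bind> K) = sets borel"
    using prob_space_bind'[OF _ KL] sets_bind'[OF _ KL] by auto
  obtain g' where g': "g' \<in> borel_measurable (L \<bind> K)" and g_ae: "AE x in L \<bind> K. g x = g' x"
    using completion_ex_borel_measurable univ_borel_measurableD[OF g \<nu>] by blast
  then obtain N where N: "N \<in> null_sets (L \<bind> K)" and "{x \<in> space (L \<bind> K). g x \<noteq> g' x} \<subseteq> N"
    using g_ae by (auto simp: eventually_ae_filter)
  then have g'_eq: "g x = g' x" if "x \<notin> N" for x
    using that sets_eq_imp_space_eq[OF \<nu>(2)] by auto
  have "(\<lambda>s. \<integral>\<^sup>+x. g' x \<partial>K s) \<in> borel_measurable L"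
    using measurable_cong_sets[OF \<nu>(2) refl] g'
    by (intro measurable_compose[OF KL' nn_integral_measurable_subprob_algebra]) auto
  moreover have "AE s in L. AE x in K s. x \<notin> N"
  proof -
    have [measurable]: "N \<in> sets borel"
      using N \<nu>(2) by auto
    have "AE x in L \<bind> K. x \<notin> N"
      using N by (rule AE_not_in)
    then show ?thesis
      by (subst (asm) AE_bind[OF KL']) auto
  qed
  then have "AE s in L. (\<integral>\<^sup>+x. g x \<partial>completion (K s)) = (\<integral>\<^sup>+x. g' x \<partial>K s)"
  proof (rule eventually_mono)
    fix s assume "AE x in K s. x \<notin> N"
    then have "AE x in completion (K s). g x = g' x"
      using g'_eq by (auto intro: AE_completion elim: eventually_mono)
    then show "(\<integral>\<^sup>+x. g x \<partial>completion (K s)) = (\<integral>\<^sup>+x. g' x \<partial>K s)"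
      using nn_integral_cong_AE by (metis nn_integral_completion)
  qed
  ultimately show "(\<lambda>s. \<integral>\<^sup>+x. g x \<partial>completion (K s)) \<in> borel_measurable (completion L)"
    by (rule borel_measurable_completion_AE_eq)
qed

lemma univ_borel_measurable_compose_countable:
  fixes f :: "'i::countable \<Rightarrow> 'a::topological_space \<Rightarrow> 'b::topological_space"
  assumes "\<And>i. univ_borel_measurable (f i)" and "univ_measurable \<rho>"
  shows "univ_borel_measurable (\<lambda>x. f (\<rho> x) x)"
  using assms unfolding univ_borel_measurable_def univ_measurable_def
  by (blast intro: measurable_compose_countable)

lemma univ_borel_measurable_comp_measurable:
  fixes g :: "'a::topological_space \<Rightarrow> ennreal"
  assumes g: "univ_borel_measurable g" and M: "prob_space M" and f: "f \<in> M \<rightarrow>\<^sub>M borel"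
  shows "(\<lambda>x. g (f x)) \<in> borel_measurable (completion M)"
proof -
  let ?L = "distr M borel f"
  have "g \<in> borel_measurable (completion ?L)"
    using univ_borel_measurableD[OF g prob_space.prob_space_distr[OF M f]] by simp
  then obtain g' where g': "g' \<in> borel_measurable ?L" and "AE y in ?L. g y = g' y"
    using completion_ex_borel_measurable by blast
  then obtain N where N: "N \<in> null_sets ?L" and g'_eq: "\<And>y. y \<notin> N \<Longrightarrow> g y = g' y"
    by (auto simp: eventually_ae_filter)
  have "f -` N \<inter> space M \<in> null_sets M"
    using N by (simp add: null_sets_distr_iff[OF f])
  then have "AE x in M. g (f x) = g' (f x)"
    by (rule AE_I') (use g'_eq in blast)
  moreover have "(\<lambda>x. g' (f x)) \<in> borel_measurable M"
    using g' f by simp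
  ultimately show ?thesis
    by (intro borel_measurable_completion_AE_eq[where H = "\<lambda>x. g' (f x)"]) auto
qed

locale policy_path_measure =
  fixes T :: "'s::polish_space \<Rightarrow> 'u::finite \<Rightarrow> 's measure"
    and \<rho> :: "'s \<Rightarrow> 'u"
    and P :: "'s \<Rightarrow> 's stream measure"
  assumes cmp: "cmp T" and policy: "univ_measurable \<rho>" and path_measure: "path_measure T \<rho> P"
begin

lemma measurable_T: "(\<lambda>s. T s u) \<in> borel \<rightarrow>\<^sub>M prob_algebra borel"
  using cmp unfolding cmp_def
  by (auto intro!: measurable_prob_algebraI measurable_subprob_algebra prob_space_imp_subprob_space)

lemma prob_space_P: "prob_space (P s)"
  and sets_P [measurable_cong]: "sets (P s) = sets (stream_space borel)"
  using path_measure by (auto simp: path_measure_def)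

lemma space_P [simp]: "space (P s) = UNIV"
  using sets_eq_imp_space_eq[OF sets_P] by (simp add: space_stream_space)

lemma emeasure_P:
  "X \<in> sets (stream_space borel) \<Longrightarrow>
   emeasure (P s) X = (\<integral>\<^sup>+ s'. emeasure (P s') {\<omega>. s ## \<omega> \<in> X} \<partial>completion (T s (\<rho> s)))"
  using path_measure by (auto simp: path_measure_def)

lemma univ_borel_measurable_nn_integral_policy:
  "univ_borel_measurable g \<Longrightarrow> univ_borel_measurable (\<lambda>s. \<integral>\<^sup>+x. g x \<partial>completion (T s (\<rho> s)))"
  by (rule univ_borel_measurable_compose_countable
      [OF univ_borel_measurable_nn_integral_completion[OF measurable_T] policy])

lemma univ_borel_measurable_emeasure_P_scylinder:
  "xs \<in> lists (sets borel) \<Longrightarrow> univ_borel_measurable (\<lambda>s. emeasure (P s) (scylinder UNIV xs))"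
proof (induction xs)
  case Nil
  show ?case
    using prob_space.emeasure_space_1[OF prob_space_P]
    by (simp add: univ_borel_measurable_def)
next
  case (Cons A As)
  then have A: "A \<in> sets borel" and As: "As \<in> lists (sets borel)"
    by auto
  let ?G = "\<lambda>s. \<integral>\<^sup>+ s'. emeasure (P s') (scylinder UNIV As) \<partial>completion (T s (\<rho> s))"
  have "emeasure (P s) (scylinder UNIV (A # As)) = indicator A s * ?G s" for s
  proof -
    have "scylinder UNIV (A # As) \<in> sets (stream_space borel)"
      by (metis sets_scylinder space_borel in_lists_conv_set Cons.prems)
    then have "emeasure (P s) (scylinder UNIV (A # As)) =
        (\<integral>\<^sup>+ s'. emeasure (P s') {\<omega>. s ## \<omega> \<in> scylinder UNIV (A # As)} \<partial>completion (T s (\<rho> s)))"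
      by (rule emeasure_P)
    also have "{\<omega>. s ## \<omega> \<in> scylinder UNIV (A # As)} = (if s \<in> A then scylinder UNIV As else {})"
      by auto
    finally show ?thesis
      by (simp split: split_indicator)
  qed
  moreover have "univ_borel_measurable ?G"
    using Cons.IH[OF As] by (rule univ_borel_measurable_nn_integral_policy)
  ultimately show ?case
    using A unfolding univ_borel_measurable_def
    by (auto intro!: borel_measurable_times_ennreal borel_measurable_indicator)
qed

lemma univ_borel_measurable_emeasure_P:
  assumes X: "X \<in> sets (stream_space borel)"
  shows "univ_borel_measurable (\<lambda>s. emeasure (P s) X)"
proof -
  have sets_eq: "sets (stream_space (borel::'s measure)) = sigma_sets UNIV (scylinder UNIV ` lists (sets borel))"
    using sets_stream_space_eq_sigma_scylinder[of "borel::'s measure"] by simp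
  have "Int_stable (scylinder UNIV ` lists (sets (borel::'s measure)))"
    using Int_stable_scylinder[of "borel::'s measure"] by simp
  moreover have "scylinder UNIV ` lists (sets (borel::'s measure)) \<subseteq> Pow UNIV"
    by blast
  ultimately show ?thesis
    using X[unfolded sets_eq]
  proof (induction rule: sigma_sets_induct_disjoint)
    case (basic A)
    then show ?case
      using univ_borel_measurable_emeasure_P_scylinder by auto
  next
    case empty
    show ?case
      by (simp add: univ_borel_measurable_def)
  next
    case (compl A)
    then have "A \<in> sets (P s)" for s
      by (simp add: sets_eq sets_P)
    then have "emeasure (P s) (UNIV - A) = 1 - emeasure (P s) A" for s
      using emeasure_compl[of A "P s"] prob_space.emeasure_space_1[OF prob_space_P]
        prob_space_P[THEN prob_space.finite_measure, THEN finite_measure.emeasure_finite]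
      by simp
    then show ?case
      using compl.IH unfolding univ_borel_measurable_def
      by (simp add: borel_measurable_minus_ennreal)
  next
    case (union A)
    then have "emeasure (P s) (\<Union>i. A i) = (\<Sum>i. emeasure (P s) (A i))" for s
      by (intro suminf_emeasure[symmetric]) (auto simp: sets_eq sets_P)
    then show ?case
      using union.IH unfolding univ_borel_measurable_def
      by (auto intro!: borel_measurable_suminf_order)
  qed
qed

definition almost_sure_states :: "'s stream set \<Rightarrow> 's set" where
  "almost_sure_states A = {s. emeasure (P s) A = 1}"

lemma AE_P_shd: "AE \<omega> in P s. shd \<omega> = s"
proof -
  have N: "{\<omega>. shd \<omega> \<noteq> s} \<in> sets (stream_space borel)"
    using measurable_sets[OF measurable_shd, of "UNIV - {s}" borel] by (simp add: space_stream_space vimage_def)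
  have "emeasure (P s) {\<omega>. shd \<omega> \<noteq> s} = 0"
    using emeasure_P[OF N, of s] by simp
  then show ?thesis
    using N by (subst AE_iff_measurable[of "{\<omega>. shd \<omega> \<noteq> s}"]) (auto simp: sets_P)
qed

lemma emeasure_P_vimage_stl:
  assumes X: "X \<in> sets (stream_space borel)"
  shows "emeasure (P s) (stl -` X) = (\<integral>\<^sup>+ s'. emeasure (P s') X \<partial>completion (T s (\<rho> s)))"
proof -
  have "stl -` X \<in> sets (stream_space borel)"
    using measurable_sets[OF measurable_stl X] by (simp add: space_stream_space)
  then show ?thesis
    by (simp add: emeasure_P)
qed

lemma AE_P_stl:
  assumes D: "{\<omega>. \<not> Q \<omega>} \<in> sets (completion (distr (P s) (stream_space borel) stl))"
    and Q: "\<And>s'. AE \<omega> in P s'. Q \<omega>"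
  shows "AE \<omega> in P s. Q (stl \<omega>)"
proof -
  let ?M = "distr (P s) (stream_space borel) stl"
  let ?S = "main_part ?M {\<omega>. \<not> Q \<omega>}"
  \<comment> \<open>The measurable part ?S of the exceptional set is null for every P s', so by the Markov
    property its preimage under stl is null for P s; the remainder is null for the image of P s.\<close>
  have stl: "stl \<in> P s \<rightarrow>\<^sub>M stream_space borel"
    by measurable
  have S: "?S \<in> sets (stream_space borel)"
    using main_part_sets[OF D] by simp
  have "emeasure (P s') ?S = 0" for s'
  proof -
    have "AE \<omega> in P s'. \<omega> \<notin> ?S"
      using Q[of s'] main_part_null_part_Un[OF D] by (auto elim: eventually_mono)
    then show ?thesis
      using S by (subst (asm) AE_iff_measurable[OF _ refl]) (auto simp: sets_P)
  qed
  then have "emeasure (P s) (stl -` ?S) = 0"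
    using S by (simp add: emeasure_P_vimage_stl)
  then have "AE \<omega> in P s. stl \<omega> \<notin> ?S"
    using measurable_sets[OF stl S] by (subst AE_iff_measurable[OF _ refl]) (auto simp: vimage_def)
  moreover obtain N where N: "N \<in> null_sets ?M" and "null_part ?M {\<omega>. \<not> Q \<omega>} \<subseteq> N"
    using null_part[OF D] by blast
  moreover have "AE \<omega> in P s. stl \<omega> \<notin> N"
    using N by (subst (asm) null_sets_distr_iff[OF stl]) (auto dest: AE_not_in)
  ultimately show ?thesis
    using main_part_null_part_Un[OF D] by (auto elim!: eventually_elim2)
qed

lemma snth_almost_sure_states_in_completion:
  assumes "prob_space M" "sets M = sets (stream_space borel)"
    and "X \<in> sets (stream_space borel)"
  shows "{\<omega>. \<omega> !! n \<in> almost_sure_states X} \<in> sets (completion M)"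
proof -
  have "(\<lambda>\<omega>. \<omega> !! n) \<in> M \<rightarrow>\<^sub>M borel"
    by (simp add: measurable_cong_sets[OF assms(2) refl])
  then have "(\<lambda>\<omega>. emeasure (P (\<omega> !! n)) X) \<in> borel_measurable (completion M)"
    using univ_borel_measurable_emeasure_P[OF assms(3)] assms(1)
    by (rule univ_borel_measurable_comp_measurable[rotated 2])
  from measurable_sets[OF this, of "{1}"] show ?thesis
    using sets_eq_imp_space_eq[OF assms(2)] by (simp add: space_stream_space vimage_def almost_sure_states_def)
qed

lemma AE_P_snth_almost_sure_states_imp:
  assumes A: "A \<in> sets (stream_space borel)" and stl_A: "\<And>\<omega>. stl \<omega> \<in> A \<longleftrightarrow> \<omega> \<in> A"
  shows "AE \<omega> in P s. \<omega> !! n \<in> almost_sure_states A \<longrightarrow> \<omega> \<in> A"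
proof (induction n arbitrary: s)
  case 0
  show ?case
  proof (cases "s \<in> almost_sure_states A")
    case True
    then have "AE \<omega> in P s. \<omega> \<in> A"
      using A by (simp add: prob_space.AE_iff_emeasure_eq_1[OF prob_space_P] sets_P almost_sure_states_def)
    then show ?thesis
      by (auto elim: eventually_mono)
  next
    case False
    then show ?thesis
      using AE_P_shd[of s] by (auto elim: eventually_mono)
  qed
next
  case (Suc n)
  let ?M = "distr (P s) (stream_space borel) stl"
  have "prob_space ?M"
    by (rule prob_space.prob_space_distr[OF prob_space_P]) measurable
  moreover have "UNIV - A \<in> sets ?M"
    using sets.compl_sets[OF A] by (simp add: space_stream_space)
  ultimately have "{\<omega>. \<omega> !! n \<in> almost_sure_states A} \<inter> (UNIV - A) \<in> sets (completion ?M)"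
    using A snth_almost_sure_states_in_completion[of ?M A n] by (intro sets.Int) auto
  also have "{\<omega>. \<omega> !! n \<in> almost_sure_states A} \<inter> (UNIV - A) =
      {\<omega>. \<not> (\<omega> !! n \<in> almost_sure_states A \<longrightarrow> \<omega> \<in> A)}"
    by blast
  finally have "AE \<omega> in P s. stl \<omega> !! n \<in> almost_sure_states A \<longrightarrow> stl \<omega> \<in> A"
    using Suc.IH by (rule AE_P_stl)
  then show ?case
    using stl_A by simp
qed

lemma measure_Eventually_in_almost_sure_states_le:
  assumes A: "A \<in> sets (stream_space borel)" and stl_A: "\<And>\<omega>. stl \<omega> \<in> A \<longleftrightarrow> \<omega> \<in> A"
  shows "measure (completion (P s)) (Eventually_in (almost_sure_states A)) \<le> measure (P s) A"
proof -
  have "AE \<omega> in P s. \<forall>n. \<omega> !! n \<in> almost_sure_states A \<longrightarrow> \<omega> \<in> A"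
    unfolding AE_all_countable using AE_P_snth_almost_sure_states_imp[OF A stl_A] by blast
  then have "AE \<omega> in completion (P s). \<omega> \<in> Eventually_in (almost_sure_states A) \<longrightarrow> \<omega> \<in> A"
    by (auto simp: Eventually_in_def AE_completion_iff elim: eventually_mono)
  then have "measure (completion (P s)) (Eventually_in (almost_sure_states A)) \<le> measure (completion (P s)) A"
    using A prob_space.finite_measure[OF prob_space.prob_space_completion[OF prob_space_P]]
    by (intro finite_measure.finite_measure_mono_AE) (auto simp: sets_P)
  then show ?thesis
    using A by (simp add: sets_P)
qed

end

theorem theorem1:
  fixes T :: "'s::polish_space \<Rightarrow> 'u::finite \<Rightarrow> 's measure"
    and \<rho> :: "'s \<Rightarrow> 'u"
    and P :: "'s \<Rightarrow> 's stream measure"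
    and B :: "nat \<Rightarrow> 's set" and l :: nat
  assumes "cmp T"
    and "measurable_partition B l"
    and "univ_measurable \<rho>"
    and "path_measure T \<rho> P"
  shows "\<forall>s. (s \<in> WinDom P B l \<longrightarrow> measure (completion (P s)) (Parity B l) = 1) \<and>
             (s \<notin> WinDom P B l \<longrightarrow>
                measure (completion (P s)) (Parity B l)
                  \<ge> measure (completion (P s)) (Eventually_in (WinDom P B l)))"
proof -
  interpret policy_path_measure T \<rho> P
    using assms(1,3,4) by unfold_locales
  have Parity: "Parity B l \<in> sets (stream_space borel)"
    using assms(2) by (rule Parity_in_sets)
  have "WinDom P B l = almost_sure_states (Parity B l)"
    using Parity prob_space_P[THEN prob_space.finite_measure, THEN finite_measure.emeasure_eq_measure]
    by (auto simp: WinDom_def almost_sure_states_def sets_P)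
  then show ?thesis
    using measure_Eventually_in_almost_sure_states_le[OF Parity stl_in_Parity_iff] Parity
    by (auto simp: WinDom_def sets_P)
qed

end
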